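(* Let $\omega\in(0,\pi/2]$ and let $S$ be a moving sofa with rotation angle $\omega$ in standard position. Let $K=\mathcal{C}(S)$. Then $\mathcal{M}(S)=K\setminus\mathcal{N}(K)$.
   Context: For $t\in\mathbb{R}$ put $u_t=(\cos t,\sin t)$, $v_t=(-\sin t,\cos t)$; $R_t$ is counterclockwise rotation about the origin by $t$. For nonempty compact $X$, $p_X(t)=\max_{p\in X}p\cdot u_t$; $H(t,h)=\{p:p\cdot u_t\le h\}$. The hallway is $L=L_H\cup L_V$, $L_H=(-\infty,1]\times[0,1]$, $L_V=[0,1]\times(-\infty,1]$. A moving sofa is a connected, nonempty, compact $S\subset\mathbb{R}^2$ such that some translate of $S$ lies in $L_H$ and can be moved by a continuous rigid motion inside $L$ to a subset of $L_V$; its rotation angle $\omega\in(0,\pi/2]$ is the total clockwise angle rotated (fixed data of the sofa). It is in standard position if $p_S(\omega)=p_S(\pi/2)=1$. Let $H=\mathbb{R}\times[0,1]$, $V=[0,1]\times\mathbb{R}$, $P_\omega=H\cap R_\omega(V)$. For nonempty compact $X$ define $L_X(t)=R_t(L)+(p_X(t)-1)u_t+(p_X(t+\pi/2)-1)v_t$, $Q_X^+(t)=H(t,p_X(t))\cap H(t+\pi/2,p_X(t+\pi/2))$, $Q_X^-(t)=\{p:p\cdot u_t<p_X(t)-1,\ p\cdot v_t<p_X(t+\pi/2)-1\}$. Monotonization: $\mathcal{M}(S)=P_\omega\cap\bigcap_{0\le t\le\omega}L_S(t)$. Cap of $S$: $\mathcal{C}(S)=P_\omega\cap\bigcap_{0\le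 t\le\omega}Q_S^+(t)$. Fan: $F_\omega=\{(x,y):y\ge0,\ x\cos\omega+y\sin\omega\ge0\}$. Niche of a compact convex $K$ (relative to $\omega$): $\mathcal{N}(K)=F_\omega\cap\bigcup_{0\le t\le\omega}Q_K^-(t)$. *)

theory Defs
  imports "HOL-Analysis.Analysis"
begin

definition uvec :: "real \<Rightarrow> real \<times> real" where
  "uvec t = (cos t, sin t)"

definition vvec :: "real \<Rightarrow> real \<times> real" where
  "vvec t = (- sin t, cos t)"

definition rot :: "real \<Rightarrow> real \<times> real \<Rightarrow> real \<times> real" where
  "rot t p = (cos t * fst p - sin t * snd p, sin t * fst p + cos t * snd p)"

definition supp :: "(real \<times> real) set \<Rightarrow> real \<Rightarrow> real" where
  "supp X t = (SUP p\<in>X. p \<bullet> uvec t)"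

definition halfplane :: "real \<Rightarrow> real \<Rightarrow> (real \<times> real) set" where
  "halfplane t h = {p. p \<bullet> uvec t \<le> h}"

definition hallway_H :: "(real \<times> real) set" where
  "hallway_H = {p. fst p \<le> 1 \<and> 0 \<le> snd p \<and> snd p \<le> 1}"

definition hallway_V :: "(real \<times> real) set" where
  "hallway_V = {p. 0 \<le> fst p \<and> fst p \<le> 1 \<and> snd p \<le> 1}"

definition hallway :: "(real \<times> real) set" where
  "hallway = hallway_H \<union> hallway_V"

text \<open>A moving sofa with rotation angle \<omega>: the body at time s is
  rot (-\<theta> s) ` S translated by x s (rotated clockwise by \<theta> s); the
  net clockwise angle rotated is \<theta> 1 - \<theta> 0 = \<omega>.\<close>
definition moving_sofa :: "real \<Rightarrow> (real \<times> real) set \<Rightarrow> bool" where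
  "moving_sofa \<omega> S \<longleftrightarrow> connected S \<and> S \<noteq> {} \<and> compact S \<and>
     (\<exists>\<theta> :: real \<Rightarrow> real. \<exists>x :: real \<Rightarrow> real \<times> real.
        continuous_on {0..1} \<theta> \<and> continuous_on {0..1} x \<and>
        \<theta> 0 = 0 \<and> \<theta> 1 = \<omega> \<and>
        (\<forall>s\<in>{0..1}. (\<lambda>p. rot (- \<theta> s) p + x s) ` S \<subseteq> hallway) \<and>
        (\<lambda>p. rot (- \<theta> 0) p + x 0) ` S \<subseteq> hallway_H \<and>
        (\<lambda>p. rot (- \<theta> 1) p + x 1) ` S \<subseteq> hallway_V)"

definition standard_position :: "real \<Rightarrow> (real \<times> real) set \<Rightarrow> bool" where
  "standard_position \<omega> S \<longleftrightarrow> supp S \<omega> = 1 \<and> supp S (pi/2) = 1"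

definition stripH :: "(real \<times> real) set" where
  "stripH = {p. 0 \<le> snd p \<and> snd p \<le> 1}"

definition stripV :: "(real \<times> real) set" where
  "stripV = {p. 0 \<le> fst p \<and> fst p \<le> 1}"

definition Pset :: "real \<Rightarrow> (real \<times> real) set" where
  "Pset \<omega> = stripH \<inter> rot \<omega> ` stripV"

definition LX :: "(real \<times> real) set \<Rightarrow> real \<Rightarrow> (real \<times> real) set" where
  "LX X t = (\<lambda>p. rot t p + (supp X t - 1) *\<^sub>R uvec t
                 + (supp X (t + pi/2) - 1) *\<^sub>R vvec t) ` hallway"

definition Qplus :: "(real \<times> real) set \<Rightarrow> real \<Rightarrow> (real \<times> real) set" where
  "Qplus X t = halfplane t (supp X t) \<inter> halfplane (t + pi/2) (supp X (t + pi/2))"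

definition Qminus :: "(real \<times> real) set \<Rightarrow> real \<Rightarrow> (real \<times> real) set" where
  "Qminus X t = {p. p \<bullet> uvec t < supp X t - 1 \<and> p \<bullet> vvec t < supp X (t + pi/2) - 1}"

definition monotonization :: "real \<Rightarrow> (real \<times> real) set \<Rightarrow> (real \<times> real) set" where
  "monotonization \<omega> S = Pset \<omega> \<inter> (\<Inter>t\<in>{0..\<omega>}. LX S t)"

definition cap :: "real \<Rightarrow> (real \<times> real) set \<Rightarrow> (real \<times> real) set" where
  "cap \<omega> S = Pset \<omega> \<inter> (\<Inter>t\<in>{0..\<omega>}. Qplus S t)"

definition fan :: "real \<Rightarrow> (real \<times> real) set" where
  "fan \<omega> = {p. snd p \<ge> 0 \<and> fst p * cos \<omega> + snd p * sin \<omega> \<ge> 0}"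

definition niche :: "real \<Rightarrow> (real \<times> real) set \<Rightarrow> (real \<times> real) set" where
  "niche \<omega> K = fan \<omega> \<inter> (\<Union>t\<in>{0..\<omega>}. Qminus K t)"

end

theory Submission
  imports Defs
begin

text \<open>Rotating the hallway by t and translating it along the frame (u_t, v_t) gives exactly
  the quadrant Q^+_S(t) with the open quadrant Q^-_S(t) removed, so M(S) is K minus the
  union of the Q^-_S(t). The initial and final positions of the sofa, inside the two straight
  arms of the hallway, together with p_S(pi/2) = p_S(omega) = 1 put S inside P_omega, hence inside
  K. Since K lies in every Q^+_S(t), the support functions of K and S agree at t and t + pi/2,
  so Q^-_K(t) = Q^-_S(t). Finally K is contained in P_omega, which lies in the fan, so the fan
  in the definition of the niche removes nothing.\<close>

lemma inner_pair: "p \<bullet> (a, b) = fst p * a + snd p * b"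
  by (cases p) (simp add: inner_prod_def)

lemma vvec_eq_uvec: "vvec t = uvec (t + pi/2)"
  by (simp add: vvec_def uvec_def sin_add cos_add)

lemma inner_uvec_self [simp]: "uvec t \<bullet> uvec t = 1"
  by (simp add: uvec_def inner_pair power2_eq_square[symmetric])

lemma inner_vvec_self [simp]: "vvec t \<bullet> vvec t = 1"
  by (simp add: vvec_def inner_pair power2_eq_square[symmetric])

lemma inner_uvec_vvec [simp]: "uvec t \<bullet> vvec t = 0" "vvec t \<bullet> uvec t = 0"
  by (simp_all add: uvec_def vvec_def inner_pair)

lemma rot_eq_frame: "rot t q = fst q *\<^sub>R uvec t + snd q *\<^sub>R vvec t"
  by (simp add: rot_def uvec_def vvec_def algebra_simps)

lemma frame_decomposition: "p = (p \<bullet> uvec t) *\<^sub>R uvec t + (p \<bullet> vvec t) *\<^sub>R vvec t"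
proof (cases p)
  case (Pair a b)
  have "cos t * cos t + sin t * sin t = 1"
    by (rule sin_cos_squared_add3)
  then have "a = (a * cos t + b * sin t) * cos t - (b * cos t - a * sin t) * sin t \<and>
      b = (a * cos t + b * sin t) * sin t + (b * cos t - a * sin t) * cos t"
    by algebra
  then show ?thesis
    using Pair by (simp add: uvec_def vvec_def inner_pair)
qed

lemma image_rot_plus_frame:
  "(\<lambda>q. rot t q + c *\<^sub>R uvec t + d *\<^sub>R vvec t) ` A
     = {p. (p \<bullet> uvec t - c, p \<bullet> vvec t - d) \<in> A}"
proof -
  have coords: "(rot t q + c *\<^sub>R uvec t + d *\<^sub>R vvec t) \<bullet> uvec t = fst q + c"
    "(rot t q + c *\<^sub>R uvec t + d *\<^sub>R vvec t) \<bullet> vvec t = snd q + d" for q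
    by (simp_all add: rot_eq_frame inner_add_left)
  have "p = rot t (p \<bullet> uvec t - c, p \<bullet> vvec t - d) + c *\<^sub>R uvec t + d *\<^sub>R vvec t" for p
    by (subst frame_decomposition[of p t]) (simp add: rot_eq_frame algebra_simps)
  then show ?thesis
    by (auto simp: coords image_iff)
qed

lemma image_rot: "rot t ` A = {p. (p \<bullet> uvec t, p \<bullet> vvec t) \<in> A}"
  using image_rot_plus_frame[of t 0 0 A] by simp

lemma mem_hallway_iff: "(a, b) \<in> hallway \<longleftrightarrow> a \<le> 1 \<and> b \<le> 1 \<and> \<not> (a < 0 \<and> b < 0)"
  by (auto simp: hallway_def hallway_H_def hallway_V_def)

lemma LX_eq_Qplus_diff_Qminus: "LX X t = Qplus X t - Qminus X t"
  unfolding LX_def image_rot_plus_frame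
  by (auto simp: mem_hallway_iff Qplus_def Qminus_def halfplane_def vvec_eq_uvec)

lemma monotonization_eq_cap_diff:
  "monotonization \<omega> S = cap \<omega> S - (\<Union>t\<in>{0..\<omega>}. Qminus S t)"
  by (auto simp: monotonization_def cap_def LX_eq_Qplus_diff_Qminus)

lemma inner_uvec_pi_half: "p \<bullet> uvec (pi/2) = snd p"
  by (simp add: uvec_def inner_pair)

lemma fst_rot_uminus: "fst (rot (- t) p) = p \<bullet> uvec t"
  by (simp add: rot_def uvec_def inner_pair)

lemma Pset_eq: "Pset \<omega> = {p. 0 \<le> snd p \<and> snd p \<le> 1 \<and> 0 \<le> p \<bullet> uvec \<omega> \<and> p \<bullet> uvec \<omega> \<le> 1}"
  by (auto simp: Pset_def stripH_def stripV_def image_rot)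

lemma Pset_subset_fan: "Pset \<omega> \<subseteq> fan \<omega>"
  by (auto simp: Pset_eq fan_def uvec_def inner_pair)

lemma supp_ge_inner:
  assumes "compact X" "p \<in> X"
  shows "p \<bullet> uvec t \<le> supp X t"
proof -
  have "compact ((\<lambda>p. p \<bullet> uvec t) ` X)"
    using assms(1) by (intro compact_continuous_image continuous_intros)
  then have "bdd_above ((\<lambda>p. p \<bullet> uvec t) ` X)"
    by (intro bounded_imp_bdd_above compact_imp_bounded)
  then show ?thesis
    unfolding supp_def using assms(2) by (rule cSUP_upper2) simp
qed

lemma supp_le:
  assumes "X \<noteq> {}" "\<And>p. p \<in> X \<Longrightarrow> p \<bullet> uvec t \<le> c"
  shows "supp X t \<le> c"
  unfolding supp_def using assms by (intro cSUP_least) auto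

lemma supp_superset_eq:
  assumes "compact S" "S \<noteq> {}" "S \<subseteq> K" "\<And>p. p \<in> K \<Longrightarrow> p \<bullet> uvec t \<le> supp S t"
  shows "supp K t = supp S t"
proof (rule antisym)
  show "supp K t \<le> supp S t"
    using assms by (intro supp_le) auto
  have "bdd_above ((\<lambda>p. p \<bullet> uvec t) ` K)"
    using assms(4) by (intro bdd_aboveI2)
  then show "supp S t \<le> supp K t"
    using assms(2,3) unfolding supp_def by (intro cSUP_least cSUP_upper) auto
qed

lemma slab_if_translate_in_slab:
  assumes "compact X" "supp X t = 1" "p \<in> X"
    and translate: "\<And>q. q \<in> X \<Longrightarrow> 0 \<le> q \<bullet> uvec t + c \<and> q \<bullet> uvec t + c \<le> 1"
  shows "0 \<le> p \<bullet> uvec t \<and> p \<bullet> uvec t \<le> 1"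
proof -
  have "supp X t \<le> 1 - c"
    using assms(3) translate by (intro supp_le) force+
  then have "c \<le> 0"
    using assms(2) by simp
  moreover have "p \<bullet> uvec t \<le> supp X t"
    using assms(1,3) by (rule supp_ge_inner)
  ultimately show ?thesis
    using assms(2) translate[OF assms(3)] by linarith
qed

lemma moving_sofa_subset_Pset:
  assumes "moving_sofa \<omega> S" "standard_position \<omega> S"
  shows "S \<subseteq> Pset \<omega>"
proof
  fix p assume "p \<in> S"
  obtain \<theta> :: "real \<Rightarrow> real" and x :: "real \<Rightarrow> real \<times> real"
    where "\<theta> 0 = 0" "\<theta> 1 = \<omega>"
    and start: "(\<lambda>p. rot (- \<theta> 0) p + x 0) ` S \<subseteq> hallway_H"
    and finish: "(\<lambda>p. rot (- \<theta> 1) p + x 1) ` S \<subseteq> hallway_V"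
    using assms(1) unfolding moving_sofa_def by blast
  have "compact S"
    using assms(1) unfolding moving_sofa_def by blast
  have supp_S: "supp S (pi/2) = 1" "supp S \<omega> = 1"
    using assms(2) by (simp_all add: standard_position_def)
  have "0 \<le> q \<bullet> uvec (pi/2) + snd (x 0) \<and> q \<bullet> uvec (pi/2) + snd (x 0) \<le> 1" if "q \<in> S" for q
    using start that \<open>\<theta> 0 = 0\<close> by (auto simp: hallway_H_def rot_def inner_uvec_pi_half)
  from slab_if_translate_in_slab[OF \<open>compact S\<close> supp_S(1) \<open>p \<in> S\<close> this]
  have "0 \<le> snd p \<and> snd p \<le> 1"
    by (simp add: inner_uvec_pi_half)
  moreover have "0 \<le> q \<bullet> uvec \<omega> + fst (x 1) \<and> q \<bullet> uvec \<omega> + fst (x 1) \<le> 1" if "q \<in> S" for q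
    using finish that \<open>\<theta> 1 = \<omega>\<close> by (auto simp: hallway_V_def fst_rot_uminus)
  from slab_if_translate_in_slab[OF \<open>compact S\<close> supp_S(2) \<open>p \<in> S\<close> this]
  have "0 \<le> p \<bullet> uvec \<omega> \<and> p \<bullet> uvec \<omega> \<le> 1" .
  ultimately show "p \<in> Pset \<omega>"
    by (simp add: Pset_eq)
qed

lemma Qminus_cap:
  assumes "compact S" "S \<noteq> {}" "S \<subseteq> Pset \<omega>" "t \<in> {0..\<omega>}"
  shows "Qminus (cap \<omega> S) t = Qminus S t"
proof -
  have "S \<subseteq> cap \<omega> S"
    using assms(1,3) supp_ge_inner by (auto simp: cap_def Qplus_def halfplane_def)
  moreover have "p \<bullet> uvec s \<le> supp S s"
    if "p \<in> cap \<omega> S" "s = t \<or> s = t + pi/2" for p s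
    using that assms(4) by (auto simp: cap_def Qplus_def halfplane_def)
  ultimately have "supp (cap \<omega> S) s = supp S s" if "s = t \<or> s = t + pi/2" for s
    using assms(1,2) that by (intro supp_superset_eq) auto
  then show ?thesis
    by (simp add: Qminus_def)
qed

theorem theorem3p12:
  fixes \<omega> :: real and S :: "(real \<times> real) set"
  assumes "0 < \<omega>" and "\<omega> \<le> pi / 2"
    and "moving_sofa \<omega> S"
    and "standard_position \<omega> S"
  shows "monotonization \<omega> S = cap \<omega> S - niche \<omega> (cap \<omega> S)"
proof -
  have "compact S" "S \<noteq> {}"
    using assms(3) unfolding moving_sofa_def by blast+
  moreover have "S \<subseteq> Pset \<omega>"
    using assms(3,4) by (rule moving_sofa_subset_Pset)
  ultimately have "niche \<omega> (cap \<omega> S) = fan \<omega> \<inter> (\<Union>t\<in>{0..\<omega>}. Qminus S t)"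
    unfolding niche_def by (simp add: Qminus_cap)
  moreover have "cap \<omega> S \<subseteq> fan \<omega>"
    using Pset_subset_fan unfolding cap_def by blast
  ultimately show ?thesis
    unfolding monotonization_eq_cap_diff by blast
qed

end
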